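(* For any even number $p$, the worst-case egalitarian rank of any balanced categorial sequential allocation mechanism with all agents pessimistic is $n^p-(n-1)p/2$. Moreover, balanced CSAMs have the smallest worst-case egalitarian rank among all CSAMs with all agents pessimistic.
   Context: Basic categorized domain: $n$ agents, $p$ categories $D_i=\{1,\ldots,n\}$ of indivisible items, bundles $\mathfrak D=D_1\times\cdots\times D_p$; each agent $j$ has a linear order $R_j$ over $\mathfrak D$; a profile is $P_n=(R_1,\ldots,R_n)$. $\mathrm{Rank}(R,\vec d)$ is the position of $\vec d$ in $R$ (top $=1$, bottom $=n^p$). CSAM $f_\mathcal O$: given a linear order $\mathcal O$ over $\{1,\ldots,n\}\times\{1,\ldots,p\}$, in rounds $t=1,\ldots,np$, if the $t$-th element of $\mathcal O$ is $(j,i)$ then agent $j$ chooses an item $d_{j,i}$ from $D_{i,t}$, the items of $D_i$ not yet chosen at the start of round $t$. Agent $j$ receives $f^j_\mathcal O(P_n)=(d_{j,1},\ldots,d_{j,p})$. A pessimistic agent $j$ choosing from $D_i$ in round $t$: a bundle is available to her if for each category $l$ from which she has already chosen its $l$-th component equals $d_{j,l}$ and for each other category $l$ its $l$-th component lies in $D_{l,t}$; she chooses the $d\in D_{i,t}$ for which her lowest-ranked available bundle with $i$-th component $d$ is highest in $R_j$. Balanced CSAM (for even $p$): given a linear order $\mathcal K=j_1\rhd\cdots\rhd j_n$ over agents, items are chosen in $p$ phases; in phase $i$ all agents choose from $D_i$, in the order $\mathcal K$ if $i$ is odd and in the reverse of $\mathcal K$ if $i$ is even. Worst-case egalitarian rank: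 $\max_{P_n}\max_{j}\mathrm{Rank}(R_j,f^j_\mathcal O(P_n))$ over all profiles of $n$ agents. *)

theory Defs
  imports Main
begin

text \<open>Conventions: agents are 0..<n, categories are 0..<p, and the items of
each category D_i are 0..<n (a shift of 1..n). A bundle is a list of length p
whose i-th entry is the item from category i. A linear order R over bundles is
represented by its rank function: a bijection from the bundles onto 1..n^p
(rank 1 = top).\<close>

definition bundles :: "nat \<Rightarrow> nat \<Rightarrow> nat list set" where
  "bundles n p = {d. length d = p \<and> (\<forall>i<p. d ! i < n)}"

definition valid_pref :: "nat \<Rightarrow> nat \<Rightarrow> (nat list \<Rightarrow> nat) \<Rightarrow> bool" where
  "valid_pref n p R \<longleftrightarrow> bij_betw R (bundles n p) {1..n ^ p}"

definition valid_profile :: "nat \<Rightarrow> nat \<Rightarrow> (nat \<Rightarrow> nat list \<Rightarrow> nat) \<Rightarrow> bool" where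
  "valid_profile n p P \<longleftrightarrow> (\<forall>j<n. valid_pref n p (P j))"

text \<open>A CSAM is given by a linear order over agents x categories, as a list.\<close>
definition valid_order :: "nat \<Rightarrow> nat \<Rightarrow> (nat \<times> nat) list \<Rightarrow> bool" where
  "valid_order n p Ord \<longleftrightarrow> distinct Ord \<and> set Ord = {..<n} \<times> {..<p}"

text \<open>Allocation state: A j l = Some x iff agent j has already chosen item x
from category l.\<close>
type_synonym state = "nat \<Rightarrow> nat \<Rightarrow> nat option"

definition remaining :: "nat \<Rightarrow> state \<Rightarrow> nat \<Rightarrow> nat set" where
  "remaining n A l = {x. x < n \<and> (\<forall>j. A j l \<noteq> Some x)}"

definition avail_bundles :: "nat \<Rightarrow> nat \<Rightarrow> state \<Rightarrow> nat \<Rightarrow> nat list set" where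
  "avail_bundles n p A j = {d. length d = p \<and> (\<forall>l<p.
      (case A j l of Some x \<Rightarrow> d ! l = x | None \<Rightarrow> d ! l \<in> remaining n A l))}"

definition pess_choice :: "nat \<Rightarrow> nat \<Rightarrow> (nat list \<Rightarrow> nat) \<Rightarrow> state \<Rightarrow> nat \<Rightarrow> nat \<Rightarrow> nat" where
  "pess_choice n p R A j i =
     arg_min_on (\<lambda>x. Max (R ` {d \<in> avail_bundles n p A j. d ! i = x})) (remaining n A i)"

fun csam_step :: "nat \<Rightarrow> nat \<Rightarrow> (nat \<Rightarrow> nat list \<Rightarrow> nat) \<Rightarrow> nat \<times> nat \<Rightarrow> state \<Rightarrow> state" where
  "csam_step n p P (j, i) A = A(j := (A j)(i := Some (pess_choice n p (P j) A j i)))"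

definition csam_run :: "nat \<Rightarrow> nat \<Rightarrow> (nat \<Rightarrow> nat list \<Rightarrow> nat) \<Rightarrow> (nat \<times> nat) list \<Rightarrow> state" where
  "csam_run n p P Ord = fold (csam_step n p P) Ord (\<lambda>_ _. None)"

definition csam_outcome :: "nat \<Rightarrow> nat \<Rightarrow> (nat \<times> nat) list \<Rightarrow> (nat \<Rightarrow> nat list \<Rightarrow> nat) \<Rightarrow> nat \<Rightarrow> nat list" where
  "csam_outcome n p Ord P j = map (\<lambda>i. the (csam_run n p P Ord j i)) [0..<p]"

definition worst_egal_rank :: "nat \<Rightarrow> nat \<Rightarrow> (nat \<times> nat) list \<Rightarrow> nat" where
  "worst_egal_rank n p Ord =
     Max {P j (csam_outcome n p Ord P j) | P j. valid_profile n p P \<and> j < n}"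

definition valid_agent_order :: "nat \<Rightarrow> nat list \<Rightarrow> bool" where
  "valid_agent_order n K \<longleftrightarrow> distinct K \<and> set K = {..<n}"

text \<open>Balanced CSAM: phase i (0-based) uses K if i is even (i.e. odd 1-based
phase), rev K otherwise.\<close>
definition balanced_order :: "nat \<Rightarrow> nat list \<Rightarrow> (nat \<times> nat) list" where
  "balanced_order p K =
     concat (map (\<lambda>i. map (\<lambda>j. (j, i)) (if even i then K else rev K)) [0..<p])"

end

theory Submission
  imports Defs
begin

text \<open>Fix an order and an agent \<open>j\<close>. When \<open>j\<close> picks from category \<open>l\<close>, some number
  \<open>c\<^sub>l\<close> of its items is already gone. The \<open>n - c\<^sub>l\<close> remaining items have distinct
  worst attainable bundles, so her pessimistic choice lowers the worst rank she can still end
  up with by at least \<open>n - 1 - c\<^sub>l\<close>; hence her final rank is at most \<open>n\<^sup>p - loss j\<close>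
  with \<open>loss j = \<Sum>\<^sub>l (n - 1 - c\<^sub>l)\<close>. Conversely, if all other agents always take the
  smallest remaining item and \<open>j\<close> ranks last the at most \<open>loss j\<close> bundles that deviate
  from this greedy course, she ends with rank at least \<open>n\<^sup>p - loss j\<close>. The losses of all
  agents add up to \<open>p n (n - 1) / 2\<close>, so some agent has loss at most \<open>(n - 1) p / 2\<close>; in a
  balanced order every agent has exactly this loss, as her positions in \<open>K\<close> and in its
  reverse add up to \<open>n - 1\<close>.\<close>

lemma double_sum_lessThan_reverse: "2 * (\<Sum>c<m. m - 1 - c) = m * (m - 1)" for m :: nat
proof -
  have "(\<Sum>c<m. m - 1 - c) = \<Sum>{0..<m}"
    using sum.nat_diff_reindex[of "\<lambda>c. c" m] by (simp add: atLeast0LessThan)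
  moreover have "even (m * (m - 1))" by (cases m) simp_all
  ultimately show ?thesis by (simp add: Sum_Ico_nat)
qed

lemma mult_add_eq_cancel:
  fixes a b a' b' M :: nat
  assumes "a * M + b = a' * M + b'" "b < M" "b' < M"
  shows "a = a' \<and> b = b'"
proof -
  have "M > 0" using assms(2) by simp
  then show ?thesis
    using arg_cong[OF assms(1), of "\<lambda>x. x div M"] arg_cong[OF assms(1), of "\<lambda>x. x mod M"] assms(2,3)
    by simp
qed

lemma takeWhile_neq_append_Cons: "x \<notin> set us \<Longrightarrow> takeWhile (\<lambda>y. y \<noteq> x) (us @ x # vs) = us"
  by (subst takeWhile_append2) auto

lemma length_takeWhile_neq_add_rev:
  assumes "distinct xs" "x \<in> set xs"
  shows "length (takeWhile (\<lambda>y. y \<noteq> x) xs) + length (takeWhile (\<lambda>y. y \<noteq> x) (rev xs))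
         = length xs - 1"
proof -
  obtain us vs where xs: "xs = us @ x # vs" "x \<notin> set us"
    using split_list_first[OF assms(2)] by blast
  then have "x \<notin> set vs" using assms(1) by simp
  then show ?thesis
    using xs takeWhile_neq_append_Cons[of x "rev vs" "rev us"] takeWhile_neq_append_Cons[of x us vs]
    by simp
qed

section \<open>Allocation states\<close>

definition category_turns :: "nat \<Rightarrow> (nat \<times> nat) list \<Rightarrow> nat" where
  "category_turns i xs = length (filter (\<lambda>a. snd a = i) xs)"

lemma category_turns_append [simp]:
  "category_turns i (xs @ ys) = category_turns i xs + category_turns i ys"
  by (simp add: category_turns_def)

lemma category_turns_single [simp]: "category_turns i [a] = (if snd a = i then 1 else 0)"
  by (simp add: category_turns_def)

lemma category_turns_eq_card:
  assumes "distinct xs" shows "category_turns i xs = card {j. (j, i) \<in> set xs}"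
proof -
  have "category_turns i xs = card (set (filter (\<lambda>a. snd a = i) xs))"
    unfolding category_turns_def using assms by (metis distinct_card distinct_filter)
  also have "set (filter (\<lambda>a. snd a = i) xs) = (\<lambda>j. (j, i)) ` {j. (j, i) \<in> set xs}"
    by force
  also have "card \<dots> = card {j. (j, i) \<in> set xs}"
    by (rule card_image) (auto simp: inj_on_def)
  finally show ?thesis .
qed

lemma category_turns_less:
  assumes "distinct xs" "\<forall>a\<in>set xs. fst a < n" "(j, i) \<notin> set xs" "j < n"
  shows "category_turns i xs < n"
proof -
  have "{j'. (j', i) \<in> set xs} \<subseteq> {..<n} - {j}" using assms by force
  then have "card {j'. (j', i) \<in> set xs} \<le> card ({..<n} - {j})" by (intro card_mono) auto
  then show ?thesis using assms by (simp add: category_turns_eq_card)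
qed

lemma finite_remaining [simp]: "finite (remaining n A l)"
  by (rule finite_subset[of _ "{..<n}"]) (auto simp: remaining_def)

lemma remaining_subset: "remaining n A l \<subseteq> {..<n}"
  by (auto simp: remaining_def)

lemma pess_choice_in_remaining:
  "remaining n A i \<noteq> {} \<Longrightarrow> pess_choice n p R A j i \<in> remaining n A i"
  unfolding pess_choice_def by (rule arg_min_if_finite(1)) simp_all

abbreviation assign :: "state \<Rightarrow> nat \<Rightarrow> nat \<Rightarrow> nat \<Rightarrow> state" where
  "assign A j i x \<equiv> A(j := (A j)(i := Some x))"

text \<open>With \<open>fun_upd_apply\<close> the nested updates make \<open>auto\<close> diverge on the goals below, so
  they evaluate assignments through this rule instead.\<close>
lemma assign_apply: "assign A j i x j' l = (if j' = j \<and> l = i then Some x else A j' l)"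
  by simp

lemma remaining_assign_other: "l \<noteq> i \<Longrightarrow> remaining n (assign A j i x) l = remaining n A l"
  unfolding remaining_def by (simp del: fun_upd_apply add: assign_apply)

lemma remaining_assign_same:
  assumes "A j i = None" shows "remaining n (assign A j i x) i = remaining n A i - {x}"
proof -
  have "(\<forall>j'. assign A j i x j' i \<noteq> Some y) \<longleftrightarrow> (\<forall>j'. A j' i \<noteq> Some y) \<and> y \<noteq> x" for y
    using assms unfolding assign_apply by (metis option.distinct(1) option.inject)
  then show ?thesis unfolding remaining_def by blast
qed

lemma avail_bundles_assign_self:
  assumes "A j i = None" "x \<in> remaining n A i" "i < p"
  shows "avail_bundles n p (assign A j i x) j = {d \<in> avail_bundles n p A j. d ! i = x}"
proof -
  have "(case assign A j i x j l of None \<Rightarrow> d ! l \<in> remaining n (assign A j i x) l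
                                  | Some y \<Rightarrow> d ! l = y)
    \<longleftrightarrow> (if l = i then d ! i = x
         else case A j l of None \<Rightarrow> d ! l \<in> remaining n A l | Some y \<Rightarrow> d ! l = y)" for d l
    by (cases "l = i")
      (simp_all del: fun_upd_apply add: assign_apply remaining_assign_other split: option.split)
  then show ?thesis
    using assms unfolding avail_bundles_def by (auto simp del: fun_upd_apply)
qed

lemma avail_bundles_assign_other:
  assumes "j' \<noteq> j" "A j i = None"
  shows "avail_bundles n p (assign A j i x) j' \<subseteq> avail_bundles n p A j'"
proof -
  have "remaining n (assign A j i x) l \<subseteq> remaining n A l" for l
    using assms(2) by (cases "l = i") (auto simp: remaining_assign_same remaining_assign_other)
  then show ?thesis
    using assms(1) unfolding avail_bundles_def
    by (fastforce simp del: fun_upd_apply simp add: assign_apply split: option.splits)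
qed

lemma list_update_in_avail_bundles:
  assumes "d \<in> avail_bundles n p A j" "A j i = None" "y \<in> remaining n A i" "i < p"
  shows "d[i := y] \<in> avail_bundles n p A j"
  using assms unfolding avail_bundles_def by (auto simp: nth_list_update split: option.splits)

lemma avail_slice_nonempty:
  assumes "avail_bundles n p A j \<noteq> {}" "A j i = None" "y \<in> remaining n A i" "i < p"
  shows "{d \<in> avail_bundles n p A j. d ! i = y} \<noteq> {}"
proof -
  obtain d where "d \<in> avail_bundles n p A j" using assms(1) by blast
  then have "d[i := y] \<in> avail_bundles n p A j" "d[i := y] ! i = y"
    using list_update_in_avail_bundles[OF _ assms(2-4)] assms(4)
    by (auto simp: avail_bundles_def)
  then show ?thesis by blast
qed

lemma bundles_eq_lists: "bundles n p = {xs. set xs \<subseteq> {..<n} \<and> length xs = p}"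
  unfolding bundles_def by (auto simp: in_set_conv_nth) (meson lessThan_iff nth_mem subsetD)

lemma finite_bundles: "finite (bundles n p)"
  by (simp add: bundles_eq_lists finite_lists_length_eq)

lemma card_bundles: "card (bundles n p) = n ^ p"
  by (simp add: bundles_eq_lists card_lists_length_eq)

section \<open>Pessimistic choices and rank functions\<close>

text \<open>Distinct items have distinct worst bundles, so the worst ranks of the slices are
  \<open>card (remaining n A i)\<close> distinct values up to the overall worst rank, and the pessimistic
  choice takes the smallest of them.\<close>
lemma pess_choice_slice_bound:
  fixes R :: "nat list \<Rightarrow> nat"
  assumes inj: "inj_on R (bundles n p)" and sub: "avail_bundles n p A j \<subseteq> bundles n p"
    and ne: "avail_bundles n p A j \<noteq> {}" and none: "A j i = None" and ip: "i < p"
    and rem_ne: "remaining n A i \<noteq> {}"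
  shows "Max (R ` {d \<in> avail_bundles n p A j. d ! i = pess_choice n p R A j i})
           + (card (remaining n A i) - 1) \<le> Max (R ` avail_bundles n p A j)"
proof -
  define V where "V = avail_bundles n p A j"
  define S where "S = remaining n A i"
  define f where "f = (\<lambda>y. Max (R ` {d \<in> V. d ! i = y}))"
  define x where "x = pess_choice n p R A j i"
  have finV: "finite V" unfolding V_def using sub finite_bundles finite_subset by blast
  have worst: "\<exists>d\<in>V. d ! i = y \<and> f y = R d" if "y \<in> S" for y
  proof -
    have "{d \<in> V. d ! i = y} \<noteq> {}"
      using avail_slice_nonempty[OF ne none _ ip] that unfolding V_def S_def by blast
    then have "f y \<in> R ` {d \<in> V. d ! i = y}" unfolding f_def using finV by (intro Max_in) auto
    then show ?thesis by blast
  qed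
  have "inj_on f S"
  proof (rule inj_onI)
    fix y y' assume "y \<in> S" "y' \<in> S" "f y = f y'"
    with worst obtain d d' where "d \<in> V" "d ! i = y" "d' \<in> V" "d' ! i = y'" "R d = R d'"
      by metis
    with inj sub show "y = y'" unfolding V_def by (metis inj_onD subsetD)
  qed
  then have "card S = card (f ` S)" by (simp add: card_image)
  also have "\<dots> \<le> card {f x .. Max (R ` V)}"
  proof (rule card_mono)
    have "f x \<le> f y" if "y \<in> S" for y
      using arg_min_least[OF finite_remaining rem_ne, where f = f] that
      unfolding x_def pess_choice_def f_def V_def S_def by simp
    moreover have "f y \<le> Max (R ` V)" if "y \<in> S" for y
      using worst[OF that] finV by auto
    ultimately show "f ` S \<subseteq> {f x .. Max (R ` V)}" by auto
  qed simp
  finally have "card S \<le> Suc (Max (R ` V)) - f x" by simp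
  moreover have "card S \<ge> 1" using rem_ne unfolding S_def by (simp add: Suc_leI card_gt_0_iff)
  ultimately show ?thesis unfolding f_def x_def V_def S_def by linarith
qed

lemma pess_choice_eqI:
  fixes R :: "nat list \<Rightarrow> nat"
  assumes sub: "avail_bundles n p A j \<subseteq> bundles n p" and ne: "avail_bundles n p A j \<noteq> {}"
    and none: "A j i = None" and ip: "i < p" and c: "c \<in> remaining n A i"
    and worse: "\<And>y d. y \<in> remaining n A i \<Longrightarrow> y \<noteq> c \<Longrightarrow> d \<in> avail_bundles n p A j \<Longrightarrow>
                 d ! i = c \<Longrightarrow> \<exists>d'\<in>avail_bundles n p A j. d' ! i = y \<and> R d < R d'"
  shows "pess_choice n p R A j i = c"
proof -
  define V where "V = avail_bundles n p A j"
  define S where "S = remaining n A i"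
  define f where "f = (\<lambda>y. Max (R ` {d \<in> V. d ! i = y}))"
  have finV: "finite V" unfolding V_def using sub finite_bundles finite_subset by blast
  obtain dc where dc: "dc \<in> V" "dc ! i = c" "f c = R dc"
  proof -
    have "{d \<in> V. d ! i = c} \<noteq> {}"
      using avail_slice_nonempty[OF ne none c ip] unfolding V_def by blast
    then have "f c \<in> R ` {d \<in> V. d ! i = c}" unfolding f_def using finV by (intro Max_in) auto
    then show ?thesis using that by blast
  qed
  have less: "f c < f y" if y: "y \<in> S" "y \<noteq> c" for y
  proof -
    obtain d' where d': "d' \<in> V" "d' ! i = y" "R dc < R d'"
      using worse[of y dc] y dc unfolding V_def S_def by blast
    then have "R d' \<le> f y" unfolding f_def using finV by (intro Max_ge) auto
    then show ?thesis using dc d' by simp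
  qed
  have "S \<noteq> {}" using c unfolding S_def by blast
  then have "f (pess_choice n p R A j i) \<le> f c"
    using arg_min_least[OF finite_remaining _ c, where f = f]
    unfolding pess_choice_def f_def V_def S_def by simp
  moreover have "pess_choice n p R A j i \<in> S"
    using pess_choice_in_remaining c unfolding S_def by blast
  ultimately show ?thesis using less by (meson leD)
qed

definition rank_by :: "(nat list \<Rightarrow> nat) \<Rightarrow> nat \<Rightarrow> nat \<Rightarrow> nat list \<Rightarrow> nat" where
  "rank_by \<kappa> n p d = card {d' \<in> bundles n p. \<kappa> d' \<le> \<kappa> d}"

lemma rank_by_less:
  assumes "d' \<in> bundles n p" "\<kappa> d < \<kappa> d'"
  shows "rank_by \<kappa> n p d < rank_by \<kappa> n p d'"
  unfolding rank_by_def
proof (rule psubset_card_mono)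
  have "{e \<in> bundles n p. \<kappa> e \<le> \<kappa> d} \<subseteq> {e \<in> bundles n p. \<kappa> e \<le> \<kappa> d'}"
    using assms(2) by auto
  moreover have "d' \<in> {e \<in> bundles n p. \<kappa> e \<le> \<kappa> d'} - {e \<in> bundles n p. \<kappa> e \<le> \<kappa> d}"
    using assms by simp
  ultimately show "{e \<in> bundles n p. \<kappa> e \<le> \<kappa> d} \<subset> {e \<in> bundles n p. \<kappa> e \<le> \<kappa> d'}"
    by blast
qed (simp add: finite_bundles)

lemma valid_pref_rank_by:
  assumes inj: "inj_on \<kappa> (bundles n p)" shows "valid_pref n p (rank_by \<kappa> n p)"
proof -
  have inj_rank: "inj_on (rank_by \<kappa> n p) (bundles n p)"
  proof (rule inj_onI, rule ccontr)
    fix d d' assume d: "d \<in> bundles n p" "d' \<in> bundles n p" "rank_by \<kappa> n p d = rank_by \<kappa> n p d'"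
      "d \<noteq> d'"
    then have "\<kappa> d < \<kappa> d' \<or> \<kappa> d' < \<kappa> d" using inj by (metis inj_onD nat_neq_iff)
    then show False using rank_by_less[of _ n p \<kappa>] d by fastforce
  qed
  have "rank_by \<kappa> n p ` bundles n p \<subseteq> {1..n ^ p}"
  proof (rule image_subsetI)
    fix d assume d: "d \<in> bundles n p"
    have "rank_by \<kappa> n p d \<le> card (bundles n p)"
      unfolding rank_by_def by (intro card_mono) (auto simp: finite_bundles)
    moreover have "rank_by \<kappa> n p d \<ge> 1"
    proof -
      have "d \<in> {d' \<in> bundles n p. \<kappa> d' \<le> \<kappa> d}" using d by simp
      then have "{d' \<in> bundles n p. \<kappa> d' \<le> \<kappa> d} \<noteq> {}" by blast
      then show ?thesis unfolding rank_by_def by (simp add: Suc_leI card_gt_0_iff finite_bundles)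
    qed
    ultimately show "rank_by \<kappa> n p d \<in> {1..n ^ p}" by (simp add: card_bundles)
  qed
  moreover have "card (rank_by \<kappa> n p ` bundles n p) = n ^ p"
    using card_image[OF inj_rank] card_bundles by simp
  ultimately have "rank_by \<kappa> n p ` bundles n p = {1..n ^ p}" by (intro card_subset_eq) auto
  then show ?thesis unfolding valid_pref_def bij_betw_def using inj_rank by simp
qed

lemma rank_by_ge:
  assumes "d \<in> bundles n p"
  shows "n ^ p - card {e \<in> bundles n p. \<kappa> d < \<kappa> e} \<le> rank_by \<kappa> n p d"
proof -
  have "bundles n p = {e \<in> bundles n p. \<kappa> e \<le> \<kappa> d} \<union> {e \<in> bundles n p. \<kappa> d < \<kappa> e}"
    by auto
  moreover have "{e \<in> bundles n p. \<kappa> e \<le> \<kappa> d} \<inter> {e \<in> bundles n p. \<kappa> d < \<kappa> e} = {}"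
    by auto
  ultimately have "card (bundles n p)
      = card {e \<in> bundles n p. \<kappa> e \<le> \<kappa> d} + card {e \<in> bundles n p. \<kappa> d < \<kappa> e}"
    by (metis card_Un_disjoint finite_Un finite_bundles)
  then show ?thesis unfolding rank_by_def card_bundles by simp
qed

section \<open>Running a mechanism\<close>

locale csam_order =
  fixes n p :: nat and Ord :: "(nat \<times> nat) list"
  assumes valid_order: "valid_order n p Ord" and n_pos: "n \<ge> 1"
begin

lemma distinct_Ord: "distinct Ord"
  using valid_order by (simp add: valid_order_def)

lemma set_Ord: "set Ord = {..<n} \<times> {..<p}"
  using valid_order by (simp add: valid_order_def)

lemma nth_Ord_bounds: "k < length Ord \<Longrightarrow> Ord ! k = (j, i) \<Longrightarrow> j < n \<and> i < p"
  using set_Ord nth_mem by fastforce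

lemma nth_Ord_notin_take: "k < length Ord \<Longrightarrow> Ord ! k \<notin> set (take k Ord)"
  using distinct_Ord by (simp add: nth_eq_iff_index_eq in_set_conv_nth)

lemma set_take_Suc_Ord:
  "k < length Ord \<Longrightarrow> set (take (Suc k) Ord) = insert (Ord ! k) (set (take k Ord))"
  by (simp add: take_Suc_conv_app_nth)

lemma category_turns_take_Suc:
  "k < length Ord \<Longrightarrow> Ord ! k = (j, i) \<Longrightarrow>
     category_turns l (take (Suc k) Ord) = category_turns l (take k Ord) + (if l = i then 1 else 0)"
  by (simp add: take_Suc_conv_app_nth)

lemma category_turns_take_less:
  assumes "(j, i) \<notin> set (take k Ord)" "j < n"
  shows "category_turns i (take k Ord) < n"
proof (rule category_turns_less[OF distinct_take[OF distinct_Ord] _ assms])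
  show "\<forall>a\<in>set (take k Ord). fst a < n" using set_Ord set_take_subset by fastforce
qed

lemma category_turns_Ord: "l < p \<Longrightarrow> category_turns l Ord = n"
  using set_Ord by (simp add: category_turns_eq_card[OF distinct_Ord])

definition run :: "(nat \<Rightarrow> nat list \<Rightarrow> nat) \<Rightarrow> nat \<Rightarrow> state" where
  "run P k = fold (csam_step n p P) (take k Ord) (\<lambda>_ _. None)"

lemma run_Suc:
  "k < length Ord \<Longrightarrow> Ord ! k = (j, i) \<Longrightarrow>
     run P (Suc k) = assign (run P k) j i (pess_choice n p (P j) (run P k) j i)"
  unfolding run_def by (simp add: take_Suc_conv_app_nth)

lemma csam_run_eq_run: "csam_run n p P Ord = run P (length Ord)"
  unfolding csam_run_def run_def by simp

lemma run_None_iff: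
  "k \<le> length Ord \<Longrightarrow> run P k j l = None \<longleftrightarrow> (j, l) \<notin> set (take k Ord)"
proof (induction k arbitrary: j l)
  case 0
  then show ?case by (simp add: run_def)
next
  case (Suc k)
  obtain j' i where "Ord ! k = (j', i)" by (cases "Ord ! k")
  then show ?case
    using Suc set_take_Suc_Ord[of k] run_Suc[of k j' i P]
    by (simp del: fun_upd_apply add: assign_apply)
qed

lemma run_at_turn_None:
  assumes "k < length Ord" "Ord ! k = (j, i)" shows "run P k j i = None"
  using run_None_iff[of k P j i] nth_Ord_notin_take[OF assms(1)] assms by simp

lemma card_remaining_run:
  "k \<le> length Ord \<Longrightarrow> card (remaining n (run P k) l) = n - category_turns l (take k Ord)"
proof (induction k arbitrary: l)
  case 0
  then show ?case by (simp add: run_def remaining_def category_turns_def)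
next
  case (Suc k)
  then have k: "k < length Ord" by simp
  obtain j i where ji: "Ord ! k = (j, i)" by (cases "Ord ! k")
  define A where "A = run P k"
  define x where "x = pess_choice n p (P j) A j i"
  have IH: "card (remaining n A l') = n - category_turns l' (take k Ord)" for l'
    using Suc k unfolding A_def by simp
  have A_ji: "A j i = None" unfolding A_def using run_at_turn_None[OF k ji] .
  have "category_turns i (take k Ord) < n"
    using category_turns_take_less nth_Ord_notin_take[OF k] nth_Ord_bounds[OF k ji] ji by simp
  then have pos: "card (remaining n A i) > 0" using IH by simp
  then have x: "x \<in> remaining n A i"
    unfolding x_def by (intro pess_choice_in_remaining) auto
  have run_Suc_k: "run P (Suc k) = assign A j i x"
    unfolding A_def x_def by (rule run_Suc[OF k ji])
  show ?case
  proof (cases "l = i")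
    case True
    then show ?thesis
      using IH pos x category_turns_take_Suc[OF k ji, of i]
      unfolding True run_Suc_k remaining_assign_same[of A j i, OF A_ji] by simp
  next
    case False
    then show ?thesis
      using IH category_turns_take_Suc[OF k ji, of l]
      unfolding run_Suc_k remaining_assign_other[OF False] by simp
  qed
qed

lemma remaining_run_nonempty:
  assumes "k \<le> length Ord" "run P k j l = None" "j < n"
  shows "remaining n (run P k) l \<noteq> {}"
proof -
  have "category_turns l (take k Ord) < n"
    using category_turns_take_less assms run_None_iff by blast
  then have "card (remaining n (run P k) l) \<noteq> 0"
    using card_remaining_run[OF assms(1), of P l] by linarith
  then show ?thesis by auto
qed

lemma run_at_turn:
  assumes "k < length Ord" "Ord ! k = (j, i)"
  shows "j < n" "i < p" "run P k j i = None" "remaining n (run P k) i \<noteq> {}"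
proof -
  show "j < n" "i < p" using nth_Ord_bounds[OF assms] by auto
  show "run P k j i = None" using run_at_turn_None[OF assms] .
  then show "remaining n (run P k) i \<noteq> {}"
    using remaining_run_nonempty \<open>j < n\<close> assms(1) by simp
qed

lemma run_Some_less: "k \<le> length Ord \<Longrightarrow> run P k j l = Some x \<Longrightarrow> x < n"
proof (induction k arbitrary: j l x)
  case 0
  then show ?case by (simp add: run_def)
next
  case (Suc k)
  then have k: "k < length Ord" by simp
  obtain j' i where ji: "Ord ! k = (j', i)" by (cases "Ord ! k")
  have "pess_choice n p (P j') (run P k) j' i \<in> remaining n (run P k) i"
    using pess_choice_in_remaining run_at_turn(4)[OF k ji] by blast
  then show ?case
    using Suc remaining_subset run_Suc[OF k ji]
    by (auto simp del: fun_upd_apply simp add: assign_apply split: if_splits)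
qed

lemma avail_bundles_run_subset: "k \<le> length Ord \<Longrightarrow> avail_bundles n p (run P k) j \<subseteq> bundles n p"
  unfolding avail_bundles_def bundles_def
  using run_Some_less remaining_subset by (fastforce split: option.splits)

lemma avail_bundles_run_nonempty:
  assumes "k \<le> length Ord" "j < n"
  shows "avail_bundles n p (run P k) j \<noteq> {}"
proof -
  define A where "A = run P k"
  define d where
    "d = map (\<lambda>l. case A j l of Some x \<Rightarrow> x | None \<Rightarrow> (SOME y. y \<in> remaining n A l)) [0..<p]"
  have "d \<in> avail_bundles n p A j"
    using remaining_run_nonempty[OF assms(1) _ assms(2)]
    unfolding avail_bundles_def d_def A_def by (auto simp: some_in_eq split: option.split)
  then show ?thesis unfolding A_def by blast
qed

lemma avail_bundles_final:
  assumes "j < n"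
  shows "avail_bundles n p (run P (length Ord)) j = {csam_outcome n p Ord P j}"
proof -
  have assigned: "run P (length Ord) j l \<noteq> None" if "l < p" for l
    using run_None_iff[of "length Ord"] set_Ord assms that by simp
  have "d = csam_outcome n p Ord P j" if "d \<in> avail_bundles n p (run P (length Ord)) j" for d
  proof (rule nth_equalityI)
    show "length d = length (csam_outcome n p Ord P j)"
      using that unfolding avail_bundles_def csam_outcome_def by simp
    fix l assume "l < length d"
    then show "d ! l = csam_outcome n p Ord P j ! l"
      using that assigned[of l] unfolding avail_bundles_def csam_outcome_def csam_run_eq_run
      by (auto split: option.splits)
  qed
  then show ?thesis using avail_bundles_run_nonempty[OF _ assms] by blast
qed

definition turn :: "nat \<Rightarrow> nat \<Rightarrow> nat" where
  "turn j l = length (takeWhile (\<lambda>a. a \<noteq> (j, l)) Ord)"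

definition picks_before :: "nat \<Rightarrow> nat \<Rightarrow> nat" where
  "picks_before j l = category_turns l (take (turn j l) Ord)"

lemma turn_nth:
  assumes "k < length Ord" "Ord ! k = (j, l)"
  shows "turn j l = k"
proof -
  have "\<forall>a\<in>set (take k Ord). a \<noteq> (j, l)" using nth_Ord_notin_take[OF assms(1)] assms(2) by auto
  then have "takeWhile (\<lambda>a. a \<noteq> (j, l)) (take k Ord @ Ord ! k # drop (Suc k) Ord) = take k Ord"
    using assms(2) by (simp add: takeWhile_append2)
  then show ?thesis unfolding turn_def using assms(1) by (simp add: id_take_nth_drop[symmetric])
qed

lemma turn_bounds:
  assumes "j < n" "l < p"
  shows "turn j l < length Ord" "Ord ! turn j l = (j, l)"
proof -
  obtain k where "k < length Ord" "Ord ! k = (j, l)"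
    using set_Ord assms in_set_conv_nth[of "(j, l)" Ord] by auto
  then show "turn j l < length Ord" "Ord ! turn j l = (j, l)" using turn_nth by simp_all
qed

lemma picks_before_nth:
  "k < length Ord \<Longrightarrow> Ord ! k = (j, i) \<Longrightarrow> picks_before j i = category_turns i (take k Ord)"
  unfolding picks_before_def using turn_nth by simp

lemma nth_Ord_in_take_iff:
  assumes "t < length Ord" shows "Ord ! t \<in> set (take k Ord) \<longleftrightarrow> t < k"
proof
  assume "Ord ! t \<in> set (take k Ord)"
  then obtain t' where "t' < k" "t' < length Ord" "Ord ! t' = Ord ! t"
    by (auto simp: in_set_conv_nth)
  then show "t < k" using nth_eq_iff_index_eq[OF distinct_Ord _ assms] by blast
next
  assume "t < k"
  then show "Ord ! t \<in> set (take k Ord)" using assms by (auto simp: in_set_conv_nth)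
qed

lemma turn_in_take_iff:
  assumes "j < n" "l < p" shows "(j, l) \<in> set (take k Ord) \<longleftrightarrow> turn j l < k"
proof -
  have "Ord ! turn j l = (j, l)" "turn j l < length Ord" using turn_bounds[OF assms] by auto
  then show ?thesis using nth_Ord_in_take_iff by metis
qed

lemma turn_inj:
  assumes "j < n" "l < p" "l' < p" "turn j l = turn j l'" shows "l = l'"
proof -
  have "(j, l) = (j, l')" using turn_bounds(2)[OF assms(1,2)] turn_bounds(2)[OF assms(1,3)] assms(4)
    by argo
  then show ?thesis by simp
qed

lemma picks_before_less:
  assumes "j < n" "l < p" shows "picks_before j l < n"
proof -
  have "(j, l) \<notin> set (take (turn j l) Ord)"
    using nth_Ord_notin_take turn_bounds[OF assms] by metis
  then show ?thesis unfolding picks_before_def using category_turns_take_less assms(1) by blast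
qed

end

section \<open>Losses and the upper bound\<close>

context csam_order
begin

definition loss :: "nat \<Rightarrow> nat" where
  "loss j = (\<Sum>l<p. n - 1 - picks_before j l)"

definition loss_upto :: "nat \<Rightarrow> nat \<Rightarrow> nat" where
  "loss_upto k j = (\<Sum>l | l < p \<and> (j, l) \<in> set (take k Ord). n - 1 - picks_before j l)"

lemma loss_upto_0: "loss_upto 0 j = 0"
  unfolding loss_upto_def by simp

lemma loss_upto_Suc:
  assumes k: "k < length Ord" and ji: "Ord ! k = (j, i)"
  shows "loss_upto (Suc k) j'
           = loss_upto k j' + (if j = j' then n - 1 - category_turns i (take k Ord) else 0)"
proof -
  have set_Suc: "set (take (Suc k) Ord) = insert (j, i) (set (take k Ord))"
    using set_take_Suc_Ord[OF k] ji by simp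
  have fresh: "(j, i) \<notin> set (take k Ord)" using nth_Ord_notin_take[OF k] ji by simp
  have i: "i < p" using nth_Ord_bounds[OF k ji] by simp
  show ?thesis
  proof (cases "j = j'")
    case True
    have "{l. l < p \<and> (j', l) \<in> set (take (Suc k) Ord)}
        = insert i {l. l < p \<and> (j', l) \<in> set (take k Ord)}"
      using set_Suc True i by auto
    moreover have "i \<notin> {l. l < p \<and> (j', l) \<in> set (take k Ord)}" using fresh True by simp
    ultimately show ?thesis unfolding loss_upto_def using True picks_before_nth[OF k ji] by simp
  next
    case False
    then have "{l. l < p \<and> (j', l) \<in> set (take (Suc k) Ord)}
        = {l. l < p \<and> (j', l) \<in> set (take k Ord)}"
      using set_Suc by auto
    then show ?thesis unfolding loss_upto_def using False by simp
  qed
qed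

lemma loss_upto_length: "j < n \<Longrightarrow> loss_upto (length Ord) j = loss j"
proof -
  assume "j < n"
  then have "{l. l < p \<and> (j, l) \<in> set (take (length Ord) Ord)} = {..<p}" using set_Ord by auto
  then show ?thesis unfolding loss_upto_def loss_def by simp
qed

lemma Max_avail_bundles_run_Suc:
  assumes "valid_pref n p (P j')" and k: "k < length Ord" and ji: "Ord ! k = (j, i)" and "j' < n"
  shows "Max (P j' ` avail_bundles n p (run P (Suc k)) j')
           + (if j = j' then n - 1 - category_turns i (take k Ord) else 0)
         \<le> Max (P j' ` avail_bundles n p (run P k) j')"
proof -
  define A where "A = run P k"
  define x where "x = pess_choice n p (P j) A j i"
  have i: "i < p" and A_ji: "A j i = None" and rem: "remaining n A i \<noteq> {}"
    using run_at_turn[OF k ji] unfolding A_def by auto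
  have x: "x \<in> remaining n A i" unfolding x_def using pess_choice_in_remaining[OF rem] .
  have run_Suc_k: "run P (Suc k) = assign A j i x"
    unfolding A_def x_def by (rule run_Suc[OF k ji])
  have sub: "avail_bundles n p A j' \<subseteq> bundles n p" and ne: "avail_bundles n p A j' \<noteq> {}"
    using avail_bundles_run_subset[of k] avail_bundles_run_nonempty[of k j'] k \<open>j' < n\<close>
    unfolding A_def by auto
  show ?thesis
  proof (cases "j = j'")
    case True
    have "inj_on (P j) (bundles n p)"
      using assms(1) True unfolding valid_pref_def by (simp add: bij_betw_def)
    then have "Max (P j ` {d \<in> avail_bundles n p A j. d ! i = x}) + (card (remaining n A i) - 1)
        \<le> Max (P j ` avail_bundles n p A j)"
      using pess_choice_slice_bound[OF _ _ _ A_ji i rem] sub ne True unfolding x_def by simp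
    moreover have "card (remaining n A i) = n - category_turns i (take k Ord)"
      unfolding A_def using card_remaining_run k by simp
    moreover have "avail_bundles n p (run P (Suc k)) j' = {d \<in> avail_bundles n p A j. d ! i = x}"
      unfolding run_Suc_k True[symmetric] by (rule avail_bundles_assign_self[OF A_ji x i])
    ultimately show ?thesis using True unfolding A_def by simp
  next
    case False
    have "avail_bundles n p (run P (Suc k)) j' \<subseteq> avail_bundles n p A j'"
      unfolding run_Suc_k using avail_bundles_assign_other[of j' j A i] False A_ji by simp
    moreover have "avail_bundles n p (run P (Suc k)) j' \<noteq> {}"
      using avail_bundles_run_nonempty k \<open>j' < n\<close> by simp
    moreover have "finite (avail_bundles n p A j')" using sub finite_bundles finite_subset by blast
    ultimately show ?thesis using False unfolding A_def by (simp add: Max_mono image_mono)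
  qed
qed

lemma rank_outcome_add_loss_le:
  assumes P: "valid_profile n p P" and j: "j < n"
  shows "P j (csam_outcome n p Ord P j) + loss j \<le> n ^ p"
proof -
  have pref: "valid_pref n p (P j)" using P j unfolding valid_profile_def by simp
  have "Max (P j ` avail_bundles n p (run P k) j) + loss_upto k j \<le> n ^ p" if "k \<le> length Ord" for k
    using that
  proof (induction k)
    case 0
    have "P j ` avail_bundles n p (run P 0) j \<subseteq> {1..n ^ p}"
      using avail_bundles_run_subset[of 0 P j] pref unfolding valid_pref_def bij_betw_def by auto
    moreover have "avail_bundles n p (run P 0) j \<noteq> {}" using avail_bundles_run_nonempty j by simp
    moreover have "finite (avail_bundles n p (run P 0) j)"
      using avail_bundles_run_subset[of 0] finite_bundles finite_subset by blast
    ultimately show ?case unfolding loss_upto_0 by (simp add: subset_eq)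
  next
    case (Suc k)
    then have k: "k < length Ord" by simp
    obtain j' i where ji: "Ord ! k = (j', i)" by (cases "Ord ! k")
    show ?case
      using Suc Max_avail_bundles_run_Suc[of P j, OF pref k ji j] loss_upto_Suc[OF k ji, of j]
      by simp
  qed
  from this[of "length Ord"] show ?thesis
    using avail_bundles_final[OF j] loss_upto_length[OF j] by simp
qed

lemma sum_loss_upto:
  "k \<le> length Ord \<Longrightarrow>
     (\<Sum>j<n. loss_upto k j) = (\<Sum>l<p. \<Sum>c<category_turns l (take k Ord). n - 1 - c)"
proof (induction k)
  case 0
  then show ?case by (simp add: loss_upto_0 category_turns_def)
next
  case (Suc k)
  then have k: "k < length Ord" by simp
  obtain j i where ji: "Ord ! k = (j, i)" by (cases "Ord ! k")
  have "j < n" "i < p" using nth_Ord_bounds[OF k ji] by auto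
  have "(\<Sum>j'<n. loss_upto (Suc k) j')
      = (\<Sum>j'<n. loss_upto k j') + (n - 1 - category_turns i (take k Ord))"
    using \<open>j < n\<close> by (simp add: loss_upto_Suc[OF k ji] sum.distrib)
  moreover have "(\<Sum>l<p. \<Sum>c<category_turns l (take (Suc k) Ord). n - 1 - c)
      = (\<Sum>l<p. (\<Sum>c<category_turns l (take k Ord). n - 1 - c)
                   + (if l = i then n - 1 - category_turns i (take k Ord) else 0))"
    by (rule sum.cong) (simp_all add: category_turns_take_Suc[OF k ji])
  then have "(\<Sum>l<p. \<Sum>c<category_turns l (take (Suc k) Ord). n - 1 - c)
      = (\<Sum>l<p. \<Sum>c<category_turns l (take k Ord). n - 1 - c)
        + (n - 1 - category_turns i (take k Ord))"
    using \<open>i < p\<close> by (simp add: sum.distrib)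
  ultimately show ?case using Suc by simp
qed

lemma double_sum_loss: "2 * (\<Sum>j<n. loss j) = p * (n * (n - 1))"
proof -
  have "(\<Sum>j<n. loss j) = (\<Sum>j<n. loss_upto (length Ord) j)" using loss_upto_length by simp
  also have "\<dots> = p * (\<Sum>c<n. n - 1 - c)"
    using sum_loss_upto[of "length Ord"] category_turns_Ord by simp
  finally show ?thesis using double_sum_lessThan_reverse[of n] by (metis mult.left_commute)
qed

lemma ex_loss_le:
  assumes "even p" shows "\<exists>j<n. loss j \<le> (n - 1) * (p div 2)"
proof (rule ccontr)
  assume "\<not> ?thesis"
  then have "(\<Sum>j<n. (n - 1) * (p div 2)) < (\<Sum>j<n. loss j)"
    using n_pos by (intro sum_strict_mono) (auto simp: lessThan_empty_iff)
  then have "2 * (n * ((n - 1) * (p div 2))) < 2 * (\<Sum>j<n. loss j)" by simp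
  also have "\<dots> = p * (n * (n - 1))" by (rule double_sum_loss)
  also have "\<dots> = 2 * (n * ((n - 1) * (p div 2)))"
    using assms by (elim evenE) (simp add: algebra_simps)
  finally show False by simp
qed

end

section \<open>Balanced orders\<close>

definition phase :: "nat list \<Rightarrow> nat \<Rightarrow> (nat \<times> nat) list" where
  "phase K i = map (\<lambda>j. (j, i)) (if even i then K else rev K)"

lemma balanced_order_eq_concat: "balanced_order p K = concat (map (phase K) [0..<p])"
  unfolding balanced_order_def phase_def by simp

lemma balanced_order_Suc: "balanced_order (Suc p) K = balanced_order p K @ phase K p"
  unfolding balanced_order_eq_concat by simp

lemma set_balanced_order: "set (balanced_order p K) = set K \<times> {..<p}"
  by (induction p) (auto simp: balanced_order_Suc phase_def balanced_order_eq_concat)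

lemma valid_order_balanced_order:
  assumes "valid_agent_order n K" shows "valid_order n p (balanced_order p K)"
proof -
  have "distinct (balanced_order p K)"
  proof (induction p)
    case 0
    then show ?case by (simp add: balanced_order_eq_concat)
  next
    case (Suc p)
    have "distinct (phase K p)"
      using assms unfolding phase_def valid_agent_order_def by (simp add: distinct_map inj_on_def)
    moreover have "set (balanced_order p K) \<inter> set (phase K p) = {}"
      unfolding set_balanced_order phase_def by auto
    ultimately show ?case using Suc by (simp add: balanced_order_Suc)
  qed
  then show ?thesis
    using assms unfolding valid_order_def valid_agent_order_def set_balanced_order by simp
qed

lemma category_turns_before_balanced:
  assumes "l < p" "j \<in> set K"
  shows "category_turns l (takeWhile (\<lambda>a. a \<noteq> (j, l)) (balanced_order p K))
         = length (takeWhile (\<lambda>x. x \<noteq> j) (if even l then K else rev K))"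
proof -
  define L where "L = (if even l then K else rev K)"
  have "j \<in> set L" using assms(2) unfolding L_def by simp
  then obtain us vs where L: "L = us @ j # vs" and j: "j \<notin> set us"
    using split_list_first by metis
  have "[0..<p] = [0..<l] @ l # [Suc l..<p]"
    using upt_add_eq_append[of 0 l "p - l"] assms(1) by (simp add: upt_conv_Cons)
  then have split: "balanced_order p K
      = balanced_order l K @ map (\<lambda>j. (j, l)) us @ (j, l) # map (\<lambda>j. (j, l)) vs
        @ concat (map (phase K) [Suc l..<p])"
    unfolding balanced_order_eq_concat by (simp add: phase_def L_def[symmetric] L)
  have fresh: "(j, l) \<notin> set (balanced_order l K @ map (\<lambda>j. (j, l)) us)"
    using j by (auto simp: set_balanced_order)
  have "takeWhile (\<lambda>a. a \<noteq> (j, l)) (balanced_order p K) = balanced_order l K @ map (\<lambda>j. (j, l)) us"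
    unfolding split
    using takeWhile_neq_append_Cons[OF fresh,
        of "map (\<lambda>j. (j, l)) vs @ concat (map (phase K) [Suc l..<p])"]
    by simp
  moreover have "category_turns l (balanced_order l K) = 0"
    by (auto simp: category_turns_def filter_empty_conv set_balanced_order)
  moreover have "takeWhile (\<lambda>x. x \<noteq> j) L = us" unfolding L using takeWhile_neq_append_Cons[OF j] .
  ultimately show ?thesis unfolding L_def[symmetric] by (simp add: category_turns_def)
qed

context csam_order
begin

lemma picks_before_eq_takeWhile:
  "picks_before j l = category_turns l (takeWhile (\<lambda>a. a \<noteq> (j, l)) Ord)"
  unfolding picks_before_def turn_def by (simp only: takeWhile_eq_take[symmetric])

text \<open>An agent preceded by \<open>m\<close> agents in \<open>K\<close> is preceded by \<open>n - 1 - m\<close> agents in \<open>rev K\<close>,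
  so every pair of consecutive phases costs her exactly \<open>n - 1\<close>.\<close>
lemma loss_balanced:
  assumes Ord: "Ord = balanced_order p K" and K: "valid_agent_order n K" and "even p" and "j < n"
  shows "loss j = (n - 1) * (p div 2)"
proof -
  define a where "a = n - 1 - length (takeWhile (\<lambda>x. x \<noteq> j) K)"
  define b where "b = n - 1 - length (takeWhile (\<lambda>x. x \<noteq> j) (rev K))"
  have "length K = n" "j \<in> set K"
    using K \<open>j < n\<close> distinct_card[of K] unfolding valid_agent_order_def by auto
  then have ab: "a + b = n - 1"
    using length_takeWhile_neq_add_rev[of K j] K unfolding a_def b_def valid_agent_order_def by simp
  have cost: "n - 1 - picks_before j l = (if even l then a else b)" if "l < p" for l
    using category_turns_before_balanced[OF that \<open>j \<in> set K\<close>] Ord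
    unfolding picks_before_eq_takeWhile a_def b_def by simp
  have "(\<Sum>l<2 * q. n - 1 - picks_before j l) = q * (n - 1)" if "2 * q \<le> p" for q
    using that
  proof (induction q)
    case (Suc q)
    then show ?case using cost[of "2 * q"] cost[of "Suc (2 * q)"] ab by simp
  qed simp
  from this[of "p div 2"] show ?thesis unfolding loss_def using \<open>even p\<close> by simp
qed

end

section \<open>An adversarial profile\<close>

definition bundle_index :: "nat \<Rightarrow> nat \<Rightarrow> nat list \<Rightarrow> nat" where
  "bundle_index n p = (SOME h. bij_betw h (bundles n p) {0..<card (bundles n p)})"

lemma bij_betw_bundle_index: "bij_betw (bundle_index n p) (bundles n p) {0..<n ^ p}"
proof -
  have "bij_betw (bundle_index n p) (bundles n p) {0..<card (bundles n p)}"
    unfolding bundle_index_def by (rule someI_ex[OF ex_bij_betw_finite_nat[OF finite_bundles]])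
  then show ?thesis by (simp add: card_bundles)
qed

lemma bundle_index_less: "d \<in> bundles n p \<Longrightarrow> bundle_index n p d < n ^ p"
  using bij_betw_bundle_index by (fastforce simp: bij_betw_def)

lemma inj_on_bundle_index: "inj_on (bundle_index n p) (bundles n p)"
  using bij_betw_bundle_index by (simp add: bij_betw_def)

text \<open>Ranking bundles by the sum of their items makes a pessimistic agent take the smallest
  remaining item.\<close>
definition sum_key :: "nat \<Rightarrow> nat \<Rightarrow> nat list \<Rightarrow> nat" where
  "sum_key n p d = sum_list d * n ^ p + bundle_index n p d"

lemma inj_on_sum_key: "inj_on (sum_key n p) (bundles n p)"
proof (rule inj_onI)
  fix d d' assume d: "d \<in> bundles n p" "d' \<in> bundles n p" "sum_key n p d = sum_key n p d'"
  then have "bundle_index n p d = bundle_index n p d'"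
    using mult_add_eq_cancel bundle_index_less unfolding sum_key_def by blast
  then show "d = d'" using inj_on_bundle_index d by (metis inj_onD)
qed

lemma sum_key_list_update_less:
  assumes "d \<in> bundles n p" "i < p" "d ! i < y"
  shows "sum_key n p d < sum_key n p (d[i := y])"
proof -
  have "i < length d" using assms unfolding bundles_def by simp
  then have "Suc (sum_list d) \<le> sum_list (d[i := y])" using assms(3) by (simp add: sum_list_update)
  then have "Suc (sum_list d) * n ^ p \<le> sum_list (d[i := y]) * n ^ p" by (rule mult_le_mono1)
  then show ?thesis unfolding sum_key_def using bundle_index_less[OF assms(1)] by simp
qed

context csam_order
begin

text \<open>Every agent so far has taken the smallest remaining item.\<close>
definition greedy_state :: "state \<Rightarrow> nat \<Rightarrow> bool" where
  "greedy_state A k \<longleftrightarrow>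
     (\<forall>j l. A j l = (if (j, l) \<in> set (take k Ord) then Some (picks_before j l) else None)) \<and>
     (\<forall>l. remaining n A l = {category_turns l (take k Ord)..<n})"

lemma greedy_state_run_0: "greedy_state (run Q 0) 0"
  unfolding greedy_state_def run_def by (auto simp: remaining_def category_turns_def)

lemma greedy_state_run_Suc:
  assumes k: "k < length Ord" and ji: "Ord ! k = (j, i)" and G: "greedy_state (run Q k) k"
    and choice: "pess_choice n p (Q j) (run Q k) j i = category_turns i (take k Ord)"
  shows "greedy_state (run Q (Suc k)) (Suc k)"
proof -
  define A where "A = run Q k"
  define c where "c = category_turns i (take k Ord)"
  have G1: "\<forall>j l. A j l = (if (j, l) \<in> set (take k Ord) then Some (picks_before j l) else None)"
   and G2: "\<forall>l. remaining n A l = {category_turns l (take k Ord)..<n}"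
    using G unfolding greedy_state_def A_def by blast+
  have A_ji: "A j i = None" using run_at_turn[OF k ji] unfolding A_def by simp
  have run_Suc_k: "run Q (Suc k) = assign A j i c"
    using run_Suc[OF k ji, of Q] choice unfolding A_def c_def by simp
  have set_Suc: "set (take (Suc k) Ord) = insert (j, i) (set (take k Ord))"
    using set_take_Suc_Ord[OF k] ji by simp
  have "picks_before j i = c" unfolding c_def using picks_before_nth[OF k ji] .
  then have "\<forall>j' l. run Q (Suc k) j' l
      = (if (j', l) \<in> set (take (Suc k) Ord) then Some (picks_before j' l) else None)"
    unfolding run_Suc_k set_Suc using G1 by (auto simp del: fun_upd_apply simp add: assign_apply)
  moreover have "remaining n (run Q (Suc k)) l = {category_turns l (take (Suc k) Ord)..<n}" for l
  proof (cases "l = i")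
    case True
    have "{c..<n} - {c} = {Suc c..<n}" by auto
    then show ?thesis
      using G2 category_turns_take_Suc[OF k ji, of i]
      unfolding True run_Suc_k remaining_assign_same[of A j i, OF A_ji] c_def by simp
  next
    case False
    then show ?thesis
      using G2 category_turns_take_Suc[OF k ji, of l]
      unfolding run_Suc_k remaining_assign_other[OF False] by simp
  qed
  ultimately show ?thesis unfolding greedy_state_def by blast
qed

lemma pess_choice_greedy_state:
  assumes k: "k < length Ord" and ji: "Ord ! k = (j, i)" and G: "greedy_state (run Q k) k"
    and worse: "\<And>y d. category_turns i (take k Ord) < y \<Longrightarrow> y < n \<Longrightarrow>
                 d \<in> avail_bundles n p (run Q k) j \<Longrightarrow> d ! i = category_turns i (take k Ord) \<Longrightarrow>
                 \<exists>d'\<in>avail_bundles n p (run Q k) j. d' ! i = y \<and> R d < R d'"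
  shows "pess_choice n p R (run Q k) j i = category_turns i (take k Ord)"
proof -
  have rem: "remaining n (run Q k) i = {category_turns i (take k Ord)..<n}"
    using G unfolding greedy_state_def by blast
  have "j < n" "i < p" "run Q k j i = None" "remaining n (run Q k) i \<noteq> {}"
    using run_at_turn[OF k ji] by auto
  then show ?thesis
  proof (intro pess_choice_eqI[OF avail_bundles_run_subset avail_bundles_run_nonempty])
    show "category_turns i (take k Ord) \<in> remaining n (run Q k) i"
      using rem \<open>remaining n (run Q k) i \<noteq> {}\<close> by auto
  next
    fix y d assume "y \<in> remaining n (run Q k) i" "y \<noteq> category_turns i (take k Ord)"
      "d \<in> avail_bundles n p (run Q k) j" "d ! i = category_turns i (take k Ord)"
    then show "\<exists>d'\<in>avail_bundles n p (run Q k) j. d' ! i = y \<and> R d < R d'"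
      using worse rem by auto
  qed (use k in auto)
qed

lemma pess_choice_sum_key:
  assumes k: "k < length Ord" and ji: "Ord ! k = (j, i)" and G: "greedy_state (run Q k) k"
  shows "pess_choice n p (rank_by (sum_key n p) n p) (run Q k) j i = category_turns i (take k Ord)"
proof (rule pess_choice_greedy_state[OF k ji G])
  fix y d assume y: "category_turns i (take k Ord) < y" "y < n"
    and d: "d \<in> avail_bundles n p (run Q k) j" "d ! i = category_turns i (take k Ord)"
  have "i < p" "run Q k j i = None" using run_at_turn[OF k ji] by auto
  moreover have "y \<in> remaining n (run Q k) i"
    using G y unfolding greedy_state_def by auto
  ultimately have "d[i := y] \<in> avail_bundles n p (run Q k) j" "d[i := y] ! i = y"
    using list_update_in_avail_bundles[OF d(1)] d(1) by (auto simp: avail_bundles_def)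
  moreover have "rank_by (sum_key n p) n p d < rank_by (sum_key n p) n p (d[i := y])"
    using avail_bundles_run_subset[of k] k d y \<open>i < p\<close> \<open>d[i := y] \<in> _\<close>
    by (intro rank_by_less sum_key_list_update_less) auto
  ultimately show "\<exists>d'\<in>avail_bundles n p (run Q k) j. d' ! i = y \<and>
      rank_by (sum_key n p) n p d < rank_by (sum_key n p) n p d'" by blast
qed

end

locale csam_agent = csam_order +
  fixes j0 :: nat
  assumes j0_less: "j0 < n"
begin

definition greedy_bundle :: "nat list" where
  "greedy_bundle = map (picks_before j0) [0..<p]"

definition deviation :: "nat \<Rightarrow> nat \<Rightarrow> nat list" where
  "deviation l y = map (\<lambda>l'. if l' = l then y
     else if turn j0 l' < turn j0 l then picks_before j0 l' else n - 1) [0..<p]"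

definition is_deviation :: "nat \<Rightarrow> nat list \<Rightarrow> bool" where
  "is_deviation l d \<longleftrightarrow>
     l < p \<and> d \<in> bundles n p \<and> picks_before j0 l < d ! l \<and> d = deviation l (d ! l)"

text \<open>The adversarial preference of \<open>j0\<close> puts the deviations at the bottom, earlier
  deviations and larger deviating items being worse, and the greedy bundle just above them.
  There are at most \<open>loss j0\<close> deviations, and they keep \<open>j0\<close> from ever leaving the greedy
  path.\<close>
definition adversary_key :: "nat list \<Rightarrow> nat" where
  "adversary_key d =
     (if \<exists>l. is_deviation l d
      then n ^ p + (length Ord - turn j0 (THE l. is_deviation l d)) * n
             + d ! (THE l. is_deviation l d)
      else if d = greedy_bundle then n ^ p else bundle_index n p d)"

lemma length_deviation [simp]: "length (deviation l y) = p"
  unfolding deviation_def by simp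

lemma nth_deviation: "l' < p \<Longrightarrow> deviation l y ! l'
    = (if l' = l then y else if turn j0 l' < turn j0 l then picks_before j0 l' else n - 1)"
  unfolding deviation_def by simp

lemma is_deviation_unique:
  assumes "is_deviation l d" "is_deviation l' d" shows "l = l'"
proof (rule ccontr)
  assume "l \<noteq> l'"
  have l: "l < p" "l' < p" using assms unfolding is_deviation_def by auto
  then have "turn j0 l \<noteq> turn j0 l'" using turn_inj[OF j0_less] \<open>l \<noteq> l'\<close> by blast
  then consider "turn j0 l < turn j0 l'" | "turn j0 l' < turn j0 l" by linarith
  then show False
  proof cases
    case 1
    then have "d ! l = picks_before j0 l"
      using assms(2) l \<open>l \<noteq> l'\<close> nth_deviation unfolding is_deviation_def by metis
    then show False using assms(1) unfolding is_deviation_def by simp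
  next
    case 2
    then have "d ! l' = picks_before j0 l'"
      using assms(1) l \<open>l \<noteq> l'\<close> nth_deviation unfolding is_deviation_def by metis
    then show False using assms(2) unfolding is_deviation_def by simp
  qed
qed

lemma is_deviation_deviation:
  assumes "l < p" "picks_before j0 l < y" "y < n"
  shows "is_deviation l (deviation l y)"
proof -
  have "deviation l y \<in> bundles n p"
    using assms picks_before_less[OF j0_less] unfolding bundles_def by (simp add: nth_deviation)
  then show ?thesis using assms unfolding is_deviation_def by (simp add: nth_deviation)
qed

lemma adversary_key_deviation:
  "is_deviation l d \<Longrightarrow> adversary_key d = n ^ p + (length Ord - turn j0 l) * n + d ! l"
  unfolding adversary_key_def using is_deviation_unique by (metis the_equality)

lemma adversary_key_deviation_ge:
  assumes "is_deviation l d" shows "n ^ p + n \<le> adversary_key d"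
proof -
  have "turn j0 l < length Ord"
    using assms turn_bounds[OF j0_less] unfolding is_deviation_def by auto
  then have "1 * n \<le> (length Ord - turn j0 l) * n" by (intro mult_le_mono1) simp
  then show ?thesis using adversary_key_deviation[OF assms] by linarith
qed

lemma adversary_key_greedy_bundle: "adversary_key greedy_bundle = n ^ p"
  unfolding adversary_key_def is_deviation_def greedy_bundle_def by auto

lemma adversary_key_other_less:
  "d \<in> bundles n p \<Longrightarrow> \<nexists>l. is_deviation l d \<Longrightarrow> d \<noteq> greedy_bundle \<Longrightarrow> adversary_key d < n ^ p"
  unfolding adversary_key_def using bundle_index_less by simp

lemma adversary_key_not_deviation_le:
  "d \<in> bundles n p \<Longrightarrow> \<nexists>l. is_deviation l d \<Longrightarrow> adversary_key d \<le> n ^ p"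
  using adversary_key_other_less adversary_key_greedy_bundle by (metis less_imp_le order_refl)

lemma adversary_key_deviation_neq:
  assumes "is_deviation l d" "d' \<in> bundles n p" "\<nexists>l. is_deviation l d'"
  shows "adversary_key d \<noteq> adversary_key d'"
  using adversary_key_deviation_ge[OF assms(1)] adversary_key_not_deviation_le[OF assms(2,3)] n_pos
  by linarith

lemma inj_on_adversary_key: "inj_on adversary_key (bundles n p)"
proof (rule inj_onI)
  fix d d' assume d: "d \<in> bundles n p" and d': "d' \<in> bundles n p"
    and eq: "adversary_key d = adversary_key d'"
  consider (both) l l' where "is_deviation l d" "is_deviation l' d'"
    | (one) "\<exists>l. is_deviation l d" "\<nexists>l. is_deviation l d'"
    | (one') "\<nexists>l. is_deviation l d" "\<exists>l. is_deviation l d'"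
    | (none) "\<nexists>l. is_deviation l d" "\<nexists>l. is_deviation l d'"
    by blast
  then show "d = d'"
  proof cases
    case both
    have "l < p" "l' < p" "d ! l < n" "d' ! l' < n"
      using both unfolding is_deviation_def bundles_def by auto
    moreover have "(length Ord - turn j0 l) * n + d ! l = (length Ord - turn j0 l') * n + d' ! l'"
      using eq adversary_key_deviation[OF both(1)] adversary_key_deviation[OF both(2)] by simp
    ultimately have "turn j0 l = turn j0 l'" "d ! l = d' ! l'"
      using mult_add_eq_cancel turn_bounds(1)[OF j0_less] by (metis diff_diff_cancel less_imp_le)+
    then have "l = l'" "d ! l = d' ! l'" using turn_inj[OF j0_less] \<open>l < p\<close> \<open>l' < p\<close> by auto
    then show ?thesis using both unfolding is_deviation_def by metis
  next
    case one
    then show ?thesis using eq adversary_key_deviation_neq d' by blast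
  next
    case one'
    then show ?thesis using eq adversary_key_deviation_neq d by metis
  next
    case none
    show ?thesis
    proof (cases "d = greedy_bundle \<or> d' = greedy_bundle")
      case True
      then show ?thesis
        using eq adversary_key_other_less[OF d none(1)] adversary_key_other_less[OF d' none(2)]
          adversary_key_greedy_bundle by (metis less_irrefl)
    next
      case False
      then have "bundle_index n p d = bundle_index n p d'"
        using eq none unfolding adversary_key_def by simp
      then show ?thesis using inj_on_bundle_index d d' by (metis inj_onD)
    qed
  qed
qed

lemma card_adversary_key_greater_le_loss:
  "card {d \<in> bundles n p. adversary_key greedy_bundle < adversary_key d} \<le> loss j0"
proof -
  have "{d \<in> bundles n p. adversary_key greedy_bundle < adversary_key d}
      \<subseteq> (\<Union>l<p. deviation l ` {picks_before j0 l<..<n})"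
  proof
    fix d assume "d \<in> {d \<in> bundles n p. adversary_key greedy_bundle < adversary_key d}"
    then obtain l where l: "is_deviation l d"
      using adversary_key_not_deviation_le adversary_key_greedy_bundle
      by (metis mem_Collect_eq not_le)
    then have "l < p" "d ! l \<in> {picks_before j0 l<..<n}" "d = deviation l (d ! l)"
      unfolding is_deviation_def bundles_def by auto
    then show "d \<in> (\<Union>l<p. deviation l ` {picks_before j0 l<..<n})" by blast
  qed
  then have "card {d \<in> bundles n p. adversary_key greedy_bundle < adversary_key d}
      \<le> card (\<Union>l<p. deviation l ` {picks_before j0 l<..<n})"
    by (intro card_mono) auto
  also have "\<dots> \<le> (\<Sum>l<p. card (deviation l ` {picks_before j0 l<..<n}))"
    by (rule card_UN_le) simp
  also have "\<dots> \<le> (\<Sum>l<p. card {picks_before j0 l<..<n})"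
    by (intro sum_mono card_image_le) simp
  also have "\<dots> = loss j0" unfolding loss_def by simp
  finally show ?thesis .
qed

lemma greedy_state_nth:
  assumes "greedy_state A k" "l < p"
  shows "A j0 l = (if turn j0 l < k then Some (picks_before j0 l) else None)"
  using assms turn_in_take_iff[OF j0_less] unfolding greedy_state_def by simp

lemma deviation_in_avail_bundles:
  assumes k: "k < length Ord" and ji: "Ord ! k = (j0, i)" and G: "greedy_state A k"
    and y: "category_turns i (take k Ord) < y" "y < n"
  shows "deviation i y \<in> avail_bundles n p A j0"
  unfolding avail_bundles_def
proof (intro CollectI conjI allI impI)
  show "length (deviation i y) = p" by simp
  fix l assume l: "l < p"
  have turn_i: "turn j0 i = k" using turn_nth[OF k ji] .
  have rem: "remaining n A l = {category_turns l (take k Ord)..<n}"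
    using G unfolding greedy_state_def by blast
  show "case A j0 l of None \<Rightarrow> deviation i y ! l \<in> remaining n A l | Some x \<Rightarrow> deviation i y ! l = x"
  proof (cases "turn j0 l < k")
    case True
    then show ?thesis using greedy_state_nth[OF G l] turn_i l by (auto simp: nth_deviation)
  next
    case False
    have "category_turns l (take k Ord) < n"
      using category_turns_take_less turn_in_take_iff[OF j0_less l] False j0_less by blast
    then show ?thesis
      using False greedy_state_nth[OF G l] turn_i l y rem by (auto simp: nth_deviation)
  qed
qed

lemma adversary_key_less_deviation:
  assumes k: "k < length Ord" and ji: "Ord ! k = (j0, i)" and G: "greedy_state A k"
    and y: "category_turns i (take k Ord) < y" "y < n"
    and d: "d \<in> avail_bundles n p A j0" "d \<in> bundles n p" "d ! i = category_turns i (take k Ord)"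
  shows "adversary_key d < adversary_key (deviation i y)"
proof -
  have turn_i: "turn j0 i = k" using turn_nth[OF k ji] .
  have i: "i < p" using nth_Ord_bounds[OF k ji] by simp
  have picks_i: "picks_before j0 i = category_turns i (take k Ord)"
    using picks_before_nth[OF k ji] .
  have key_dev: "adversary_key (deviation i y) = n ^ p + (length Ord - k) * n + y"
    using adversary_key_deviation[OF is_deviation_deviation[OF i _ y(2)]] y(1) picks_i turn_i i
    by (simp add: nth_deviation)
  show ?thesis
  proof (cases "\<exists>l. is_deviation l d")
    case True
    then obtain l where l: "is_deviation l d" by blast
    then have "l < p" "picks_before j0 l < d ! l" "d ! l < n"
      using d(2) unfolding is_deviation_def bundles_def by auto
    have "\<not> turn j0 l < k"
    proof
      assume "turn j0 l < k"
      then have "A j0 l = Some (picks_before j0 l)" using greedy_state_nth[OF G \<open>l < p\<close>] by simp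
      then have "d ! l = picks_before j0 l"
        using d(1) \<open>l < p\<close> unfolding avail_bundles_def by fastforce
      then show False using \<open>picks_before j0 l < d ! l\<close> by simp
    qed
    moreover have "l \<noteq> i" using \<open>picks_before j0 l < d ! l\<close> d(3) picks_i by auto
    then have "turn j0 l \<noteq> k" using turn_inj[OF j0_less \<open>l < p\<close> i] turn_i by auto
    ultimately have "Suc (length Ord - turn j0 l) \<le> length Ord - k"
      using turn_bounds(1)[OF j0_less \<open>l < p\<close>] by linarith
    from mult_le_mono1[OF this, of n]
    have "(length Ord - turn j0 l) * n + n \<le> (length Ord - k) * n" by simp
    then show ?thesis
      using adversary_key_deviation[OF l] key_dev \<open>d ! l < n\<close> by linarith
  next
    case False
    have "1 * n \<le> (length Ord - k) * n" using k by (intro mult_le_mono1) simp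
    then show ?thesis
      using adversary_key_not_deviation_le[OF d(2) False] key_dev n_pos by linarith
  qed
qed

lemma pess_choice_adversary_key:
  assumes k: "k < length Ord" and ji: "Ord ! k = (j0, i)" and G: "greedy_state (run Q k) k"
  shows "pess_choice n p (rank_by adversary_key n p) (run Q k) j0 i = category_turns i (take k Ord)"
proof (rule pess_choice_greedy_state[OF k ji G])
  fix y d assume y: "category_turns i (take k Ord) < y" "y < n"
    and d: "d \<in> avail_bundles n p (run Q k) j0" "d ! i = category_turns i (take k Ord)"
  have i: "i < p" using nth_Ord_bounds[OF k ji] by simp
  have "d \<in> bundles n p" using avail_bundles_run_subset[of k] k d(1) by auto
  have "deviation i y \<in> bundles n p"
    using is_deviation_deviation[OF i _ y(2)] y(1) picks_before_nth[OF k ji]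
    unfolding is_deviation_def by simp
  then have "rank_by adversary_key n p d < rank_by adversary_key n p (deviation i y)"
    using adversary_key_less_deviation[OF k ji G y d(1) \<open>d \<in> bundles n p\<close> d(2)]
    by (rule rank_by_less)
  moreover have "deviation i y ! i = y" using i by (simp add: nth_deviation)
  ultimately show "\<exists>d'\<in>avail_bundles n p (run Q k) j0. d' ! i = y \<and>
      rank_by adversary_key n p d < rank_by adversary_key n p d'"
    using deviation_in_avail_bundles[OF k ji G y] by blast
qed

definition adversarial_profile :: "nat \<Rightarrow> nat list \<Rightarrow> nat" where
  "adversarial_profile j =
     (if j = j0 then rank_by adversary_key n p else rank_by (sum_key n p) n p)"

lemma valid_profile_adversarial_profile: "valid_profile n p adversarial_profile"
  unfolding valid_profile_def adversarial_profile_def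
  using valid_pref_rank_by[OF inj_on_adversary_key] valid_pref_rank_by[OF inj_on_sum_key] by simp

lemma greedy_state_adversarial_run: "k \<le> length Ord \<Longrightarrow> greedy_state (run adversarial_profile k) k"
proof (induction k)
  case 0
  show ?case by (rule greedy_state_run_0)
next
  case (Suc k)
  then have k: "k < length Ord" by simp
  obtain j i where ji: "Ord ! k = (j, i)" by (cases "Ord ! k")
  have G: "greedy_state (run adversarial_profile k) k" using Suc by simp
  have "pess_choice n p (adversarial_profile j) (run adversarial_profile k) j i
      = category_turns i (take k Ord)"
    using pess_choice_adversary_key[OF k _ G] pess_choice_sum_key[OF k ji G] ji
    unfolding adversarial_profile_def by auto
  then show ?case by (rule greedy_state_run_Suc[OF k ji G])
qed

lemma csam_outcome_adversarial_profile:
  "csam_outcome n p Ord adversarial_profile j0 = greedy_bundle"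
  using greedy_state_nth[OF greedy_state_adversarial_run[OF order.refl]] turn_bounds(1)[OF j0_less]
  unfolding csam_outcome_def greedy_bundle_def csam_run_eq_run by simp

lemma adversarial_rank_ge:
  "n ^ p - loss j0 \<le> adversarial_profile j0 (csam_outcome n p Ord adversarial_profile j0)"
proof -
  have "greedy_bundle \<in> bundles n p"
    unfolding greedy_bundle_def bundles_def using picks_before_less[OF j0_less] by simp
  then show ?thesis
    using rank_by_ge[of greedy_bundle n p adversary_key] card_adversary_key_greater_le_loss
    unfolding csam_outcome_adversarial_profile adversarial_profile_def by simp
qed

end

section \<open>Worst-case egalitarian rank\<close>

context csam_order
begin

lemma ex_profile_rank_ge:
  assumes "j < n"
  shows "\<exists>P. valid_profile n p P \<and> n ^ p - loss j \<le> P j (csam_outcome n p Ord P j)"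
proof -
  interpret csam_agent n p Ord j by unfold_locales (rule assms)
  show ?thesis using valid_profile_adversarial_profile adversarial_rank_ge by blast
qed

abbreviation egal_ranks :: "nat set" where
  "egal_ranks \<equiv> {P j (csam_outcome n p Ord P j) | P j. valid_profile n p P \<and> j < n}"

lemma finite_egal_ranks: "finite egal_ranks"
proof (rule finite_subset)
  show "egal_ranks \<subseteq> {..n ^ p}" using rank_outcome_add_loss_le by fastforce
qed simp

lemma egal_ranks_nonempty: "egal_ranks \<noteq> {}"
  using ex_profile_rank_ge[of 0] n_pos by fastforce

lemma worst_egal_rank_ge: "even p \<Longrightarrow> n ^ p - (n - 1) * (p div 2) \<le> worst_egal_rank n p Ord"
proof -
  assume "even p"
  then obtain j where j: "j < n" "loss j \<le> (n - 1) * (p div 2)" using ex_loss_le by blast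
  then obtain P where P: "valid_profile n p P" "n ^ p - loss j \<le> P j (csam_outcome n p Ord P j)"
    using ex_profile_rank_ge by blast
  then have "P j (csam_outcome n p Ord P j) \<le> worst_egal_rank n p Ord"
    unfolding worst_egal_rank_def using finite_egal_ranks j(1) by (intro Max_ge) blast+
  then show ?thesis using P(2) j(2) by linarith
qed

lemma worst_egal_rank_balanced:
  assumes "Ord = balanced_order p K" "valid_agent_order n K" "even p"
  shows "worst_egal_rank n p Ord = n ^ p - (n - 1) * (p div 2)"
proof (rule antisym)
  show "worst_egal_rank n p Ord \<le> n ^ p - (n - 1) * (p div 2)"
    unfolding worst_egal_rank_def
    using rank_outcome_add_loss_le loss_balanced[OF assms]
    by (subst Max_le_iff[OF finite_egal_ranks egal_ranks_nonempty]) fastforce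
qed (rule worst_egal_rank_ge[OF assms(3)])

end

theorem proposition4:
  fixes n p :: nat
  assumes "n \<ge> 1" and "even p"
  shows "(\<forall>K. valid_agent_order n K \<longrightarrow>
            worst_egal_rank n p (balanced_order p K) = n ^ p - (n - 1) * (p div 2))
       \<and> (\<forall>K Ord. valid_agent_order n K \<longrightarrow> valid_order n p Ord \<longrightarrow>
            worst_egal_rank n p (balanced_order p K) \<le> worst_egal_rank n p Ord)"
proof -
  have balanced: "worst_egal_rank n p (balanced_order p K) = n ^ p - (n - 1) * (p div 2)"
    if "valid_agent_order n K" for K
  proof -
    interpret csam_order n p "balanced_order p K"
      using valid_order_balanced_order[OF that] assms(1) by unfold_locales
    show ?thesis using worst_egal_rank_balanced[OF refl that assms(2)] .
  qed
  have "n ^ p - (n - 1) * (p div 2) \<le> worst_egal_rank n p Ord" if "valid_order n p Ord" for Ord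
  proof -
    interpret csam_order n p Ord using that assms(1) by unfold_locales
    show ?thesis using worst_egal_rank_ge[OF assms(2)] .
  qed
  with balanced show ?thesis by simp
qed

end
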